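(* Let $s'\in\mathbb C$ and $f\in C_c^{\mathrm{lc}}(S\mathfrak X)$, regarded as a function on $G/M$ via $gM\mapsto f(go,g\omega_+)$. Then for every $n\in\mathbb N_0$ and $g\in G$, $$\mathcal I_{s',n}(f)(g)=\sum_{\substack{x\in H_{\omega_+}(o)\\ d(x,o)\le 2n}}f(gx,g\omega_+)\,q^{-d(x,o)(\frac12-i\overline{s'})}.$$ In particular $\mathcal I_{s',0}(f)=f$.
   Context: Let $q\ge2$, $\mathfrak G$ the $(q+1)$-regular tree with vertex set $\mathfrak X$, graph distance $d$ and boundary $\Omega$ (infinite non-backtracking edge chains modulo eventual equality up to shift); $[x,\omega)$ is the ray from $x$ to $\omega$. Fix a vertex $o$ and $\omega_-\ne\omega_+$ with $o$ on the geodesic $]\omega_-,\omega_+[$; $\langle x,\omega\rangle=d(o,y)-d(x,y)$ where $[o,\omega)\cap[x,\omega)=[y,\omega)$. $H_{\omega_+}(o)=\{x\in\mathfrak X:\langle x,\omega_+\rangle=0\}$. $S\mathfrak X=\mathfrak X\times\Omega$, $C_c^{\mathrm{lc}}(S\mathfrak X)$ its locally constant compactly supported functions. $G=\mathrm{Aut}(\mathfrak G)$, $K=\mathrm{Stab}_G(o)$, $M=\{\gamma\in K:\gamma$ fixes $]\omega_-,\omega_+[$ pointwise$\}$, $B_{\omega_+}=\{g\in G:g\omega_+=\omega_+,\ g\text{ fixes some vertex}\}$, a unimodular locally compact group whose Haar measure $du$ is normalized so that $B_{\omega_+}\cap\mathrm{Stab}_G(x)$ has measure $q^{\langle x,\omega_+\rangle}$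 for each $x\in\mathfrak X$. For $n\in\mathbb N_0$ let $x_n$ be the vertex of $[o,\omega_+)$ with $d(o,x_n)=n$ and $B_{\omega_+,n}=B_{\omega_+}\cap\mathrm{Stab}_G(x_n)$. For functions $F$ on $G/M$, $\mathcal I_{s',n}(F)(gM)=\int_{B_{\omega_+,n}}F(guM)\,q^{\langle uo,\omega_-\rangle(\frac12-i\overline{s'})}\,du$. *)

theory Defs
  imports "HOL-Analysis.Analysis"
begin

definition walk :: "('v \<Rightarrow> 'v \<Rightarrow> bool) \<Rightarrow> nat \<Rightarrow> 'v \<Rightarrow> 'v \<Rightarrow> bool" where
  "walk adj n x y \<longleftrightarrow> (\<exists>p. p 0 = x \<and> p n = y \<and> (\<forall>i<n. adj (p i) (p (Suc i))))"

definition gdist :: "('v \<Rightarrow> 'v \<Rightarrow> bool) \<Rightarrow> 'v \<Rightarrow> 'v \<Rightarrow> nat" where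
  "gdist adj x y = (LEAST n. walk adj n x y)"

definition regular_tree :: "nat \<Rightarrow> ('v \<Rightarrow> 'v \<Rightarrow> bool) \<Rightarrow> bool" where
  "regular_tree q adj \<longleftrightarrow>
     (\<forall>x y. adj x y \<longrightarrow> adj y x) \<and> (\<forall>x. \<not> adj x x) \<and>
     (\<forall>x y. \<exists>n. walk adj n x y) \<and>
     (\<forall>n p. 0 < n \<and> p 0 = p n \<and> (\<forall>i<n. adj (p i) (p (Suc i)))
             \<longrightarrow> (\<exists>i. i + 2 \<le> n \<and> p (i + 2) = p i)) \<and>
     (\<forall>x. finite {y. adj x y} \<and> card {y. adj x y} = q + 1)"

definition is_ray :: "('v \<Rightarrow> 'v \<Rightarrow> bool) \<Rightarrow> (nat \<Rightarrow> 'v) \<Rightarrow> bool" where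
  "is_ray adj r \<longleftrightarrow> (\<forall>n. adj (r n) (r (Suc n))) \<and> (\<forall>n. r (Suc (Suc n)) \<noteq> r n)"

definition ray_rel :: "('v \<Rightarrow> 'v \<Rightarrow> bool) \<Rightarrow> ((nat \<Rightarrow> 'v) \<times> (nat \<Rightarrow> 'v)) set" where
  "ray_rel adj = {(r, r'). is_ray adj r \<and> is_ray adj r' \<and> (\<exists>k m. \<forall>n. r (n + k) = r' (n + m))}"

definition boundary :: "('v \<Rightarrow> 'v \<Rightarrow> bool) \<Rightarrow> (nat \<Rightarrow> 'v) set set" where
  "boundary adj = Collect (is_ray adj) // ray_rel adj"

definition ray_from :: "'v \<Rightarrow> (nat \<Rightarrow> 'v) set \<Rightarrow> (nat \<Rightarrow> 'v)" where
  "ray_from x \<omega> = (THE r. r \<in> \<omega> \<and> r 0 = x)"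

text \<open>Busemann function \<langle>x,\<omega>\<rangle> = d(o0,y) - d(x,y), where [o0,\<omega>)\<inter>[x,\<omega>) = [y,\<omega>),
  i.e. y is the first vertex of [x,\<omega>) lying on [o0,\<omega>).\<close>
definition busemann :: "('v \<Rightarrow> 'v \<Rightarrow> bool) \<Rightarrow> 'v \<Rightarrow> 'v \<Rightarrow> (nat \<Rightarrow> 'v) set \<Rightarrow> int" where
  "busemann adj o0 x \<omega> =
     (let r = ray_from o0 \<omega>; r' = ray_from x \<omega>;
          y = r' (LEAST k. r' k \<in> range r)
      in int (gdist adj o0 y) - int (gdist adj x y))"

definition horosphere :: "('v \<Rightarrow> 'v \<Rightarrow> bool) \<Rightarrow> 'v \<Rightarrow> (nat \<Rightarrow> 'v) set \<Rightarrow> 'v set" where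
  "horosphere adj o0 \<omega> = {x. busemann adj o0 x \<omega> = 0}"

definition automs :: "('v \<Rightarrow> 'v \<Rightarrow> bool) \<Rightarrow> ('v \<Rightarrow> 'v) set" where
  "automs adj = {g. bij g \<and> (\<forall>x y. adj (g x) (g y) \<longleftrightarrow> adj x y)}"

definition bact :: "('v \<Rightarrow> 'v) \<Rightarrow> (nat \<Rightarrow> 'v) set \<Rightarrow> (nat \<Rightarrow> 'v) set" where
  "bact g \<omega> = (\<lambda>r. g \<circ> r) ` \<omega>"

definition stab :: "('v \<Rightarrow> 'v \<Rightarrow> bool) \<Rightarrow> 'v \<Rightarrow> ('v \<Rightarrow> 'v) set" where
  "stab adj x = {g \<in> automs adj. g x = x}"

definition Bgrp :: "('v \<Rightarrow> 'v \<Rightarrow> bool) \<Rightarrow> (nat \<Rightarrow> 'v) set \<Rightarrow> ('v \<Rightarrow> 'v) set" where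
  "Bgrp adj \<omega> = {g \<in> automs adj. bact g \<omega> = \<omega> \<and> (\<exists>x. g x = x)}"

definition Bgrp_n :: "('v \<Rightarrow> 'v \<Rightarrow> bool) \<Rightarrow> 'v \<Rightarrow> (nat \<Rightarrow> 'v) set \<Rightarrow> nat \<Rightarrow> ('v \<Rightarrow> 'v) set" where
  "Bgrp_n adj o0 \<omega> n = Bgrp adj \<omega> \<inter> stab adj (ray_from o0 \<omega> n)"

definition Btop :: "('v \<Rightarrow> 'v \<Rightarrow> bool) \<Rightarrow> (nat \<Rightarrow> 'v) set \<Rightarrow> ('v \<Rightarrow> 'v) topology" where
  "Btop adj \<omega> = subtopology (product_topology (\<lambda>_. discrete_topology UNIV) UNIV) (Bgrp adj \<omega>)"

definition borel_of_top :: "'a topology \<Rightarrow> 'a measure" where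
  "borel_of_top T = sigma (topspace T) {U. openin T U}"

definition normalized_haar ::
  "nat \<Rightarrow> ('v \<Rightarrow> 'v \<Rightarrow> bool) \<Rightarrow> 'v \<Rightarrow> (nat \<Rightarrow> 'v) set \<Rightarrow> ('v \<Rightarrow> 'v) measure \<Rightarrow> bool" where
  "normalized_haar q adj o0 \<omega> \<mu> \<longleftrightarrow>
     space \<mu> = Bgrp adj \<omega> \<and>
     sets \<mu> = sets (borel_of_top (Btop adj \<omega>)) \<and>
     (\<forall>g \<in> Bgrp adj \<omega>. \<forall>A \<in> sets \<mu>. emeasure \<mu> ((\<lambda>u. g \<circ> u) ` A) = emeasure \<mu> A) \<and>
     (\<forall>x. emeasure \<mu> (Bgrp adj \<omega> \<inter> stab adj x)
            = ennreal (real q powr real_of_int (busemann adj o0 x \<omega>)))"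

text \<open>The topology on \<Omega> is the cone topology; basic neighbourhoods of \<omega> are
  the sets of \<omega>' whose ray from o0 agrees with [o0,\<omega>) up to step N.  X is discrete
  and \<Omega> compact, so compact support means support over finitely many vertices.\<close>
definition lc_cc :: "('v \<Rightarrow> 'v \<Rightarrow> bool) \<Rightarrow> 'v \<Rightarrow> ('v \<times> (nat \<Rightarrow> 'v) set \<Rightarrow> complex) \<Rightarrow> bool" where
  "lc_cc adj o0 f \<longleftrightarrow>
     (\<exists>F. finite F \<and> (\<forall>x. \<forall>\<omega>\<in>boundary adj. f (x, \<omega>) \<noteq> 0 \<longrightarrow> x \<in> F)) \<and>
     (\<forall>x. \<forall>\<omega>\<in>boundary adj. \<exists>N. \<forall>\<omega>'\<in>boundary adj.
         ray_from o0 \<omega>' N = ray_from o0 \<omega> N \<longrightarrow> f (x, \<omega>') = f (x, \<omega>))"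

text \<open>For f on SX regarded as function on G/M via gM \<mapsto> f(go, g\<omega>+):
  I_{s',n}(f)(g) = \<integral>_{B_{\<omega>+,n}} f(guo, gu\<omega>+) q^{\<langle>uo,\<omega>-\<rangle>(1/2 - i conj s')} du.\<close>
definition I_op ::
  "nat \<Rightarrow> ('v \<Rightarrow> 'v \<Rightarrow> bool) \<Rightarrow> 'v \<Rightarrow> (nat \<Rightarrow> 'v) set \<Rightarrow> (nat \<Rightarrow> 'v) set \<Rightarrow>
   ('v \<Rightarrow> 'v) measure \<Rightarrow> complex \<Rightarrow> nat \<Rightarrow> ('v \<times> (nat \<Rightarrow> 'v) set \<Rightarrow> complex) \<Rightarrow>
   ('v \<Rightarrow> 'v) \<Rightarrow> complex" where
  "I_op q adj o0 \<omega>m \<omega>p \<mu> s' n f g =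
     (LINT u : Bgrp_n adj o0 \<omega>p n | \<mu>.
        f ((g \<circ> u) o0, bact (g \<circ> u) \<omega>p) *
        of_nat q powr (of_int (busemann adj o0 (u o0) \<omega>m) * (1/2 - \<i> * cnj s')))"

end

theory Submission
  imports Defs
begin

text \<open>
A vertex x of the horosphere H_{\<omega>+}(o) reaches the ray [o,\<omega>+) at some x_k after k steps,
so d(x,o) = 2k, and the ray from x to \<omega>- runs through o, so \<langle>x,\<omega>-\<rangle> = -d(x,o).
For u \<in> B_{\<omega>+,n} the vertex uo lies on the horosphere with d(uo,o) \<le> 2n, and the integrand
depends on u only through uo. A nonempty fibre of u \<mapsto> uo is a left coset of
B_{\<omega>+} \<inter> Stab(o), which has Haar measure q^0 = 1. The horosphere ball of radius 2n lies in a
sphere of radius n about x_n inside one branch of the tree, so it has at most q^n points, whereas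
B_{\<omega>+,n} has measure q^n: hence every fibre over the ball is nonempty, and the integral is the
sum over the ball.
\<close>

definition nb_walk :: "('v \<Rightarrow> 'v \<Rightarrow> bool) \<Rightarrow> (nat \<Rightarrow> 'v) \<Rightarrow> nat \<Rightarrow> bool" where
  "nb_walk adj p n \<longleftrightarrow>
     (\<forall>i<n. adj (p i) (p (Suc i))) \<and> (\<forall>i. i + 2 \<le> n \<longrightarrow> p (i + 2) \<noteq> p i)"

lemma nb_walk_mono: "nb_walk adj p n \<Longrightarrow> m \<le> n \<Longrightarrow> nb_walk adj p m"
  unfolding nb_walk_def by auto

lemma nb_walk_shift: "nb_walk adj p n \<Longrightarrow> k + m \<le> n \<Longrightarrow> nb_walk adj (\<lambda>i. p (i + k)) m"
  unfolding nb_walk_def by (auto simp: add.commute add.left_commute)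

lemma is_ray_iff_nb_walk: "is_ray adj r \<longleftrightarrow> (\<forall>n. nb_walk adj r n)"
  unfolding is_ray_def nb_walk_def by (metis add_2_eq_Suc' le_add2 lessI)

lemma is_ray_shift_nb_walk: "is_ray adj r \<Longrightarrow> nb_walk adj (\<lambda>i. r (i + k)) n"
  unfolding is_ray_def nb_walk_def by (metis add_2_eq_Suc' add_Suc)

lemma nb_walk_append:
  assumes "nb_walk adj p a" "nb_walk adj p' b" "p a = p' 0"
    and "0 < a \<and> 0 < b \<longrightarrow> p (a - 1) \<noteq> p' 1"
  shows "nb_walk adj (\<lambda>i. if i < a then p i else p' (i - a)) (a + b)"
  unfolding nb_walk_def
proof (intro conjI allI impI)
  fix i assume "i < a + b"
  then consider "Suc i < a" | "Suc i = a" | "a \<le> i" "i - a < b" "Suc i - a = Suc (i - a)"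
    by linarith
  then show "adj (if i < a then p i else p' (i - a)) (if Suc i < a then p (Suc i) else p' (Suc i - a))"
    by cases (use assms(1,2,3) in \<open>auto simp: nb_walk_def\<close>)
next
  fix i assume "i + 2 \<le> a + b"
  then consider "i + 2 < a" | "i + 2 = a" | "i + 1 = a" "0 < b" | "a \<le> i" "i - a + 2 \<le> b"
    by linarith
  then show "(if i + 2 < a then p (i + 2) else p' (i + 2 - a)) \<noteq> (if i < a then p i else p' (i - a))"
  proof cases
    case 4
    then have "i + 2 - a = i - a + 2" by simp
    with 4 assms(2) show ?thesis unfolding nb_walk_def by auto
  qed (use assms in \<open>auto simp: nb_walk_def\<close>)
qed

lemma nb_walk_reverse:
  assumes "nb_walk adj p n" and "\<And>x y. adj x y \<Longrightarrow> adj y x"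
  shows "nb_walk adj (\<lambda>i. p (n - i)) n"
  unfolding nb_walk_def
proof (intro conjI allI impI)
  fix i assume "i < n"
  then have "adj (p (n - Suc i)) (p (Suc (n - Suc i)))" and "Suc (n - Suc i) = n - i"
    using assms(1) unfolding nb_walk_def by auto
  then show "adj (p (n - i)) (p (n - Suc i))" using assms(2) by metis
next
  fix i assume "i + 2 \<le> n"
  then have "p (n - (i + 2) + 2) \<noteq> p (n - (i + 2))" and "n - (i + 2) + 2 = n - i"
    using assms(1) unfolding nb_walk_def by auto
  then show "p (n - (i + 2)) \<noteq> p (n - i)" by metis
qed

definition branch_sphere :: "('v \<Rightarrow> 'v \<Rightarrow> bool) \<Rightarrow> 'v \<Rightarrow> 'v \<Rightarrow> nat \<Rightarrow> 'v set" where
  "branch_sphere adj v w m = {p m | p. p 0 = v \<and> nb_walk adj p m \<and> (0 < m \<longrightarrow> p 1 \<noteq> w)}"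

lemma equiv_ray_rel: "equiv (Collect (is_ray adj)) (ray_rel adj)"
proof (rule equivI)
  show "ray_rel adj \<subseteq> Collect (is_ray adj) \<times> Collect (is_ray adj)"
    unfolding ray_rel_def by auto
  show "refl_on (Collect (is_ray adj)) (ray_rel adj)"
    unfolding refl_on_def ray_rel_def by auto
  show "sym (ray_rel adj)"
    unfolding sym_def ray_rel_def by (auto, metis)
  show "trans (ray_rel adj)"
  proof (rule transI)
    fix r r' r'' assume "(r, r') \<in> ray_rel adj" "(r', r'') \<in> ray_rel adj"
    then obtain k m k' m' where "\<forall>n. r (n + k) = r' (n + m)" "\<forall>n. r' (n + k') = r'' (n + m')"
      and rays: "is_ray adj r" "is_ray adj r''"
      unfolding ray_rel_def by blast
    then have "r (n + (k + k')) = r'' (n + (m + m'))" for n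
      by (metis add.assoc add.commute)
    with rays show "(r, r'') \<in> ray_rel adj" unfolding ray_rel_def by blast
  qed
qed

lemma boundary_is_ray: "\<omega> \<in> boundary adj \<Longrightarrow> r \<in> \<omega> \<Longrightarrow> is_ray adj r"
  using in_quotient_imp_subset[OF equiv_ray_rel] unfolding boundary_def by blast

lemma boundary_mem_iff:
  assumes "\<omega> \<in> boundary adj" "r \<in> \<omega>"
  shows "r' \<in> \<omega> \<longleftrightarrow> (r, r') \<in> ray_rel adj"
  using assms in_quotient_imp_in_rel[OF equiv_ray_rel] in_quotient_imp_closed[OF equiv_ray_rel]
  unfolding boundary_def by blast

lemma boundary_shift_mem:
  assumes "\<omega> \<in> boundary adj" "r \<in> \<omega>"
  shows "(\<lambda>i. r (i + j)) \<in> \<omega>"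
proof -
  have "is_ray adj r" using boundary_is_ray assms .
  moreover from this have "is_ray adj (\<lambda>i. r (i + j))" by (simp add: is_ray_def)
  moreover have "\<forall>n. r (n + j) = (\<lambda>i. r (i + j)) (n + 0)" by simp
  ultimately have "(r, \<lambda>i. r (i + j)) \<in> ray_rel adj"
    unfolding ray_rel_def by blast
  then show ?thesis using boundary_mem_iff assms by blast
qed

lemma bact_comp: "bact (g \<circ> u) \<omega> = bact g (bact u \<omega>)"
  unfolding bact_def by (auto simp: image_image comp_assoc)

lemma automs_comp: "g \<in> automs adj \<Longrightarrow> u \<in> automs adj \<Longrightarrow> g \<circ> u \<in> automs adj"
  unfolding automs_def by (auto intro: bij_comp)

lemma automs_inv:
  assumes "g \<in> automs adj"
  shows "inv g \<in> automs adj"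
proof -
  have g: "bij g" "\<And>x y. adj (g x) (g y) \<longleftrightarrow> adj x y" using assms unfolding automs_def by blast+
  have "g (inv g z) = z" for z using g(1) by (simp add: bij_is_surj surj_f_inv_f)
  then have "adj (inv g x) (inv g y) \<longleftrightarrow> adj x y" for x y using g(2)[of "inv g x" "inv g y"] by simp
  then show ?thesis unfolding automs_def using bij_imp_bij_inv[OF g(1)] by blast
qed

lemma bact_inv:
  assumes "g \<in> automs adj" "bact g \<omega> = \<omega>"
  shows "bact (inv g) \<omega> = \<omega>"
proof -
  have "inv g \<circ> g = id" using assms(1) unfolding automs_def by (simp add: bij_is_inj)
  then have "bact (inv g \<circ> g) \<omega> = \<omega>" by (simp add: bact_def)
  then have "bact (inv g) (bact g \<omega>) = \<omega>" by (simp add: bact_comp)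
  then show ?thesis using assms(2) by simp
qed

lemma openin_Btop_fix: "openin (Btop adj \<omega>) (Bgrp adj \<omega> \<inter> {u. u a = b})"
proof -
  let ?P = "product_topology (\<lambda>_::'a. discrete_topology (UNIV::'a set)) UNIV"
  have "continuous_map ?P (discrete_topology UNIV) (\<lambda>u. u a)"
    using continuous_map_product_projection[of a UNIV "\<lambda>_. discrete_topology UNIV"] by simp
  then have "openin ?P {u \<in> topspace ?P. u a \<in> {b}}"
    by (rule openin_continuous_map_preimage) simp
  moreover have "{u \<in> topspace ?P. u a \<in> {b}} = {u. u a = b}"
    by (simp add: topspace_product_topology PiE_UNIV_domain)
  ultimately show ?thesis unfolding Btop_def openin_subtopology by blast
qed

lemma normalized_haar_sets_fix:
  assumes "normalized_haar q adj o0 \<omega> \<mu>"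
  shows "Bgrp adj \<omega> \<inter> {u. u a = b} \<inter> {u. u c = d} \<in> sets \<mu>"
proof -
  have sub: "{U. openin (Btop adj \<omega>) U} \<subseteq> Pow (topspace (Btop adj \<omega>))"
    using openin_subset by blast
  have "(Bgrp adj \<omega> \<inter> {u. u a = b}) \<inter> (Bgrp adj \<omega> \<inter> {u. u c = d}) =
      Bgrp adj \<omega> \<inter> {u. u a = b} \<inter> {u. u c = d}" by blast
  then have "openin (Btop adj \<omega>) (Bgrp adj \<omega> \<inter> {u. u a = b} \<inter> {u. u c = d})"
    using openin_Int[OF openin_Btop_fix openin_Btop_fix] by metis
  then have "Bgrp adj \<omega> \<inter> {u. u a = b} \<inter> {u. u c = d} \<in> sets (borel_of_top (Btop adj \<omega>))"
    unfolding borel_of_top_def sets_measure_of[OF sub] by (intro sigma_sets.Basic) simp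
  then show ?thesis using assms unfolding normalized_haar_def by simp
qed

lemma set_integral_fibrewise:
  fixes F :: "'b \<Rightarrow> 'c::{banach, second_countable_topology}"
  assumes "finite C" and h: "\<And>u. u \<in> A \<Longrightarrow> \<phi> u \<in> C \<and> h u = F (\<phi> u)"
    and sets: "\<And>y. y \<in> C \<Longrightarrow> {u \<in> A. \<phi> u = y} \<in> sets M"
    and measure: "\<And>y. y \<in> C \<Longrightarrow> measure M {u \<in> A. \<phi> u = y} = 1"
  shows "(LINT u:A|M. h u) = (\<Sum>y\<in>C. F y)"
proof -
  let ?S = "\<lambda>y. {u \<in> A. \<phi> u = y}"
  have finite: "emeasure M (?S y) < \<infinity>" if "y \<in> C" for y
    using measure[OF that] by (auto simp: measure_def less_top)
  have "indicator A u *\<^sub>R h u = (\<Sum>y\<in>C. indicator (?S y) u *\<^sub>R F y)" for u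
  proof (cases "u \<in> A")
    case True
    then have "(\<Sum>y\<in>C. indicator (?S y) u *\<^sub>R F y) = (\<Sum>y\<in>C. if y = \<phi> u then F y else 0)"
      by (intro sum.cong) (auto simp: indicator_def)
    with True h[OF True] assms(1) show ?thesis by simp
  qed simp
  then have "(LINT u:A|M. h u) = (LINT u|M. (\<Sum>y\<in>C. indicator (?S y) u *\<^sub>R F y))"
    unfolding set_lebesgue_integral_def by presburger
  also have "\<dots> = (\<Sum>y\<in>C. LINT u|M. indicator (?S y) u *\<^sub>R F y)"
    using sets finite
    by (intro Bochner_Integration.integral_sum[where f = "\<lambda>y u. indicator (?S y) u *\<^sub>R F y"]
        integrable_scaleR_left integrable_real_indicator) auto
  also have "\<dots> = (\<Sum>y\<in>C. F y)"
  proof (rule sum.cong)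
    fix y assume y: "y \<in> C"
    have "?S y \<subseteq> space M" using sets.sets_into_space[OF sets[OF y]] .
    then show "(LINT u|M. indicator (?S y) u *\<^sub>R F y) = F y"
      using sets[OF y] finite[OF y] measure[OF y] by (simp add: Int_absorb2)
  qed simp
  finally show ?thesis .
qed

locale regular_tree_graph =
  fixes q :: nat and adj :: "'v \<Rightarrow> 'v \<Rightarrow> bool"
  assumes regular_tree: "regular_tree q adj"
begin

lemma adj_sym: "adj x y \<Longrightarrow> adj y x"
  using regular_tree unfolding regular_tree_def by blast

lemma walk_exists: "\<exists>n. walk adj n x y"
  using regular_tree unfolding regular_tree_def by blast

lemma finite_neighbours: "finite {y. adj x y}"
  and card_neighbours: "card {y. adj x y} = q + 1"
  using regular_tree unfolding regular_tree_def by blast+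

lemma nb_walk_closed: assumes "nb_walk adj p n" "p 0 = p n" shows "n = 0"
proof (rule ccontr)
  assume "n \<noteq> 0"
  with assms regular_tree obtain i where "i + 2 \<le> n" "p (i + 2) = p i"
    unfolding regular_tree_def nb_walk_def by blast
  with assms(1) show False unfolding nb_walk_def by blast
qed

lemma nb_walk_unique:
  assumes "nb_walk adj p n" "nb_walk adj p' m" "p 0 = p' 0" "p n = p' m"
  shows "n = m \<and> (\<forall>i\<le>n. p i = p' i)"
  using assms
proof (induction n arbitrary: m)
  case 0
  then show ?case using nb_walk_closed[of p' m] by simp
next
  case (Suc n)
  then obtain m' where m: "m = Suc m'"
    using nb_walk_closed[of p "Suc n"] by (cases m) auto
  show ?case
  proof (cases "p n = p' m'")
    case True
    with Suc m have "n = m' \<and> (\<forall>i\<le>n. p i = p' i)"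
      using nb_walk_mono[of adj _ "Suc _"] by (intro Suc.IH) auto
    with Suc.prems(4) m show ?thesis by (metis le_Suc_eq)
  next
    case False
    \<comment> \<open>then p followed by p' backwards is a closed non-backtracking walk\<close>
    have "nb_walk adj (\<lambda>i. if i < Suc n then p i else p' (m - (i - Suc n))) (Suc n + m)"
      by (rule nb_walk_append) (use Suc.prems False m nb_walk_reverse adj_sym in auto)
    from nb_walk_closed[OF this] show ?thesis using Suc.prems(3) by simp
  qed
qed

lemma walk_gdist: "walk adj (gdist adj x y) x y"
  unfolding gdist_def by (rule LeastI_ex) (rule walk_exists)

lemma gdist_le_walk: "walk adj n x y \<Longrightarrow> gdist adj x y \<le> n"
  unfolding gdist_def by (rule Least_le)

lemma geodesic_nb_walk:
  assumes "p 0 = x" "p (gdist adj x y) = y" "\<forall>i<gdist adj x y. adj (p i) (p (Suc i))"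
  shows "nb_walk adj p (gdist adj x y)"
proof -
  let ?d = "gdist adj x y"
  have "p (i + 2) \<noteq> p i" if i: "i + 2 \<le> ?d" for i
  proof
    assume backtrack: "p (i + 2) = p i"
    define p' where "p' j = (if j \<le> i then p j else p (j + 2))" for j
    have "walk adj (?d - 2) x y" unfolding walk_def
    proof (intro exI[of _ p'] conjI allI impI)
      have "Suc (Suc (?d - 2)) = ?d" "?d - 2 \<le> i \<Longrightarrow> i = ?d - 2" using i by auto
      then show "p' 0 = x" "p' (?d - 2) = y"
        using assms(1,2) backtrack by (auto simp: p'_def)
      fix j assume "j < ?d - 2"
      then show "adj (p' j) (p' (Suc j))"
        using assms(3) backtrack i unfolding p'_def
        by (cases "j < i"; cases "j = i") (auto, metis add_2_eq_Suc' less_diff_conv)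
    qed
    then show False using gdist_le_walk i by fastforce
  qed
  then show ?thesis using assms(3) unfolding nb_walk_def by blast
qed

lemma geodesic_exists:
  obtains p where "p 0 = x" "p (gdist adj x y) = y" "nb_walk adj p (gdist adj x y)"
  using walk_gdist[of x y] geodesic_nb_walk unfolding walk_def by blast

lemma gdist_nb_walk: assumes "nb_walk adj p n" shows "gdist adj (p 0) (p n) = n"
proof -
  obtain p' where "p' 0 = p 0" "p' (gdist adj (p 0) (p n)) = p n"
    "nb_walk adj p' (gdist adj (p 0) (p n))"
    by (rule geodesic_exists)
  with nb_walk_unique[OF assms] show ?thesis by metis
qed

lemma gdist_refl [simp]: "gdist adj x x = 0"
  using gdist_nb_walk[of "\<lambda>_. x" 0] by (simp add: nb_walk_def)

lemma gdist_eq_0_iff: "gdist adj x y = 0 \<longleftrightarrow> x = y"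
proof
  show "gdist adj x y = 0 \<Longrightarrow> x = y"
    using walk_gdist[of x y] unfolding walk_def by auto
  show "x = y \<Longrightarrow> gdist adj x y = 0" by simp
qed

lemma ray_inj: assumes "is_ray adj r" shows "inj r"
proof -
  have "i = j" if "i \<le> j" "r i = r j" for i j
    using nb_walk_closed[OF is_ray_shift_nb_walk[OF assms, of i "j - i"]] that by simp
  then show ?thesis by (metis injI nat_le_linear)
qed

lemma gdist_ray: "is_ray adj r \<Longrightarrow> gdist adj (r k) (r (k + n)) = n"
  using gdist_nb_walk[OF is_ray_shift_nb_walk[of adj r k n]] by (simp add: add.commute)

lemma is_ray_reverse_nb_walk: "is_ray adj r \<Longrightarrow> nb_walk adj (\<lambda>i. r (n - i)) n"
  using nb_walk_reverse adj_sym is_ray_iff_nb_walk by blast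

lemma boundary_eq_if_start_eq:
  assumes "\<omega> \<in> boundary adj" "r \<in> \<omega>" "r' \<in> \<omega>" "r 0 = r' 0"
  shows "r = r'"
proof
  fix i
  obtain k m where km: "\<forall>n. r (n + k) = r' (n + m)" and "is_ray adj r" "is_ray adj r'"
    using boundary_mem_iff[OF assms(1,2)] assms(3) unfolding ray_rel_def by blast
  then have "nb_walk adj r k" "nb_walk adj r' m" by (simp_all add: is_ray_iff_nb_walk)
  then have "k = m \<and> (\<forall>i\<le>k. r i = r' i)"
    using nb_walk_unique assms(4) km[rule_format, of 0] by simp
  then show "r i = r' i" using km[rule_format, of "i - k"] by (cases "i \<le> k") auto
qed

lemma boundary_ex_start:
  assumes "\<omega> \<in> boundary adj"
  obtains r where "r \<in> \<omega>" "r 0 = x"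
proof -
  obtain r0 where r0: "r0 \<in> \<omega>"
    using in_quotient_imp_non_empty[OF equiv_ray_rel] assms unfolding boundary_def by blast
  then have ray0: "is_ray adj r0" using boundary_is_ray assms by blast
  obtain k where k_min: "\<And>k'. gdist adj x (r0 k) \<le> gdist adj x (r0 k')"
    using ex_has_least_nat[of "\<lambda>_. True" 0 "\<lambda>k. gdist adj x (r0 k)"] by blast
  define d where "d = gdist adj x (r0 k)"
  obtain p where p: "p 0 = x" "p d = r0 k" "nb_walk adj p d"
    unfolding d_def by (rule geodesic_exists)
  define r where "r i = (if i < d then p i else r0 (i - d + k))" for i
  have "p (d - 1) \<noteq> r0 (Suc k)" if "0 < d"
  proof
    assume "p (d - 1) = r0 (Suc k)"
    then have "walk adj (d - 1) x (r0 (Suc k))"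
      unfolding walk_def using p that by (intro exI[of _ p]) (auto simp: nb_walk_def)
    then show False using k_min[of "Suc k"] gdist_le_walk that unfolding d_def by fastforce
  qed
  then have "nb_walk adj r (d + n)" for n
    unfolding r_def using nb_walk_append[OF p(3) is_ray_shift_nb_walk[OF ray0, of k n]] p(2)
    by simp
  then have "is_ray adj r"
    unfolding is_ray_iff_nb_walk by (meson le_add2 nb_walk_mono)
  moreover have "\<forall>n. r0 (n + k) = r (n + d)" by (simp add: r_def)
  ultimately have "r \<in> \<omega>"
    using boundary_mem_iff[OF assms r0] ray0 unfolding ray_rel_def by blast
  moreover have "r 0 = x" using p by (cases "d = 0") (auto simp: r_def)
  ultimately show ?thesis using that by blast
qed

lemma ray_from_eqI:
  assumes "\<omega> \<in> boundary adj" "r \<in> \<omega>" "r 0 = x"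
  shows "ray_from x \<omega> = r"
  unfolding ray_from_def
  by (rule the_equality) (use assms boundary_eq_if_start_eq in auto)

lemma ray_from:
  assumes "\<omega> \<in> boundary adj"
  shows "ray_from x \<omega> \<in> \<omega>" "ray_from x \<omega> 0 = x" "is_ray adj (ray_from x \<omega>)"
proof -
  obtain r where "r \<in> \<omega>" "r 0 = x" using boundary_ex_start[OF assms] .
  with ray_from_eqI[OF assms] show "ray_from x \<omega> \<in> \<omega>" "ray_from x \<omega> 0 = x" by auto
  then show "is_ray adj (ray_from x \<omega>)" using boundary_is_ray[OF assms] by blast
qed

lemma card_branch_sphere:
  "adj v w \<Longrightarrow> finite (branch_sphere adj v w m) \<and> card (branch_sphere adj v w m) \<le> q ^ m"
proof (induction m arbitrary: v w)
  case 0
  have "branch_sphere adj v w 0 = {v}" unfolding branch_sphere_def nb_walk_def by auto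
  then show ?case by simp
next
  case (Suc m)
  let ?N = "{c. adj v c} - {w}"
  have sub: "branch_sphere adj v w (Suc m) \<subseteq> (\<Union>c\<in>?N. branch_sphere adj c v m)"
  proof
    fix z assume "z \<in> branch_sphere adj v w (Suc m)"
    then obtain p where p: "z = p (Suc m)" "p 0 = v" "nb_walk adj p (Suc m)" "p 1 \<noteq> w"
      unfolding branch_sphere_def by auto
    have "nb_walk adj (\<lambda>i. p (i + 1)) m" using nb_walk_shift[OF p(3), of 1 m] by simp
    moreover have "0 < m \<Longrightarrow> p (0 + 2) \<noteq> p 0" using p(3) unfolding nb_walk_def by auto
    ultimately have "z \<in> branch_sphere adj (p 1) v m"
      unfolding branch_sphere_def using p(1,2)
      by (auto simp: numeral_2_eq_2 intro!: exI[of _ "\<lambda>i. p (i + 1)"])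
    moreover have "adj v (p 1)" using p(2,3) unfolding nb_walk_def by auto
    ultimately show "z \<in> (\<Union>c\<in>?N. branch_sphere adj c v m)" using p(4) by blast
  qed
  have IH: "finite (branch_sphere adj c v m) \<and> card (branch_sphere adj c v m) \<le> q ^ m"
    if "c \<in> ?N" for c
    using Suc.IH adj_sym that by blast
  have "card ?N = q" using card_neighbours[of v] finite_neighbours[of v] Suc.prems by simp
  have fin: "finite ?N" using finite_neighbours by simp
  have "card (\<Union>c\<in>?N. branch_sphere adj c v m) \<le> (\<Sum>c\<in>?N. card (branch_sphere adj c v m))"
    by (rule card_UN_le[OF fin])
  also have "\<dots> \<le> (\<Sum>c\<in>?N. q ^ m)" by (rule sum_mono) (use IH in blast)
  also have "\<dots> = q ^ Suc m" using \<open>card ?N = q\<close> by simp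
  finally have "card (\<Union>c\<in>?N. branch_sphere adj c v m) \<le> q ^ Suc m" .
  moreover have "finite (\<Union>c\<in>?N. branch_sphere adj c v m)" using fin IH by blast
  ultimately show ?case using sub by (meson card_mono finite_subset order_trans)
qed

end

locale geodesic_frame = regular_tree_graph +
  fixes o0 :: 'v and \<omega>m \<omega>p :: "(nat \<Rightarrow> 'v) set"
  assumes \<omega>m: "\<omega>m \<in> boundary adj" and \<omega>p: "\<omega>p \<in> boundary adj"
    and rays_meet_at_o0: "range (ray_from o0 \<omega>m) \<inter> range (ray_from o0 \<omega>p) = {o0}"
begin

abbreviation "rp \<equiv> ray_from o0 \<omega>p"
abbreviation "rm \<equiv> ray_from o0 \<omega>m"

lemma rp: "rp \<in> \<omega>p" "rp 0 = o0" "is_ray adj rp"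
  using ray_from[OF \<omega>p] by blast+

lemma rm: "rm \<in> \<omega>m" "rm 0 = o0" "is_ray adj rm"
  using ray_from[OF \<omega>m] by blast+

lemma rp_1_neq_rm_1: "rp 1 \<noteq> rm 1"
proof
  assume "rp 1 = rm 1"
  then have "rp 1 \<in> range rm \<inter> range rp" by (metis IntI rangeI)
  then have "rp 1 = rp 0" unfolding rays_meet_at_o0 rp(2) by simp
  then show False using ray_inj[OF rp(3)] by (metis inj_eq one_neq_zero)
qed

definition meet_index :: "'v \<Rightarrow> nat" where
  "meet_index x = (LEAST k. ray_from x \<omega>p k \<in> range rp)"

lemma ray_from_before_meet_index: "k < meet_index x \<Longrightarrow> ray_from x \<omega>p k \<notin> range rp"
  unfolding meet_index_def by (rule not_less_Least)

lemma ray_from_meet_index: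
  obtains j where "\<forall>i. ray_from x \<omega>p (meet_index x + i) = rp (j + i)"
    and "busemann adj o0 x \<omega>p = int j - int (meet_index x)"
proof -
  let ?r = "ray_from x \<omega>p" and ?K = "meet_index x"
  obtain k m where "\<forall>n. rp (n + k) = ?r (n + m)"
    using boundary_mem_iff[OF \<omega>p rp(1)] ray_from(1)[OF \<omega>p] unfolding ray_rel_def by blast
  then have "\<exists>k. ?r k \<in> range rp" by (metis add_0 rangeI)
  then have "?r ?K \<in> range rp" unfolding meet_index_def by (rule LeastI_ex)
  then obtain j where j: "?r ?K = rp j" by blast
  have "(\<lambda>i. ?r (i + ?K)) = (\<lambda>i. rp (i + j))"
    by (rule boundary_eq_if_start_eq[OF \<omega>p boundary_shift_mem[OF \<omega>p] boundary_shift_mem[OF \<omega>p]])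
      (use j ray_from(1)[OF \<omega>p] rp(1) in simp_all)
  then have tail: "?r (?K + i) = rp (j + i)" for i by (metis add.commute)
  have "busemann adj o0 x \<omega>p =
      int (gdist adj (rp 0) (rp (0 + j))) - int (gdist adj (?r 0) (?r (0 + ?K)))"
    unfolding busemann_def Let_def meet_index_def[symmetric]
    by (simp add: ray_from(2)[OF \<omega>p] rp(2) j)
  then have "busemann adj o0 x \<omega>p = int j - int ?K"
    using gdist_ray[OF rp(3)] gdist_ray[OF ray_from(3)[OF \<omega>p]] by presburger
  with tail show ?thesis using that by blast
qed

lemma busemann_rp: "busemann adj o0 (rp n) \<omega>p = int n"
proof -
  have "ray_from (rp n) \<omega>p = (\<lambda>i. rp (i + n))"
    using ray_from_eqI[OF \<omega>p boundary_shift_mem[OF \<omega>p rp(1)]] by simp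
  then have K: "meet_index (rp n) = 0" unfolding meet_index_def by (simp add: Least_equality)
  obtain j where "\<forall>i. ray_from (rp n) \<omega>p (meet_index (rp n) + i) = rp (j + i)"
    and "busemann adj o0 (rp n) \<omega>p = int j - int (meet_index (rp n))"
    by (rule ray_from_meet_index[of "rp n"])
  moreover from this(1)[rule_format, of 0] have "n = j"
    using K ray_from(2)[OF \<omega>p] ray_inj[OF rp(3)] by (simp add: inj_eq)
  ultimately show ?thesis using K by simp
qed

lemma horosphere_ray_from:
  assumes "x \<in> horosphere adj o0 \<omega>p"
  shows "ray_from x \<omega>p (meet_index x + i) = rp (meet_index x + i)"
proof -
  obtain j where "\<forall>i. ray_from x \<omega>p (meet_index x + i) = rp (j + i)"
    and "busemann adj o0 x \<omega>p = int j - int (meet_index x)"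
    by (rule ray_from_meet_index[of x])
  with assms show ?thesis unfolding horosphere_def by simp
qed

definition horo_path :: "'v \<Rightarrow> nat \<Rightarrow> 'v" where
  "horo_path x i =
     (if i < meet_index x then ray_from x \<omega>p i else rp (meet_index x - (i - meet_index x)))"

lemma horo_path:
  assumes "x \<in> horosphere adj o0 \<omega>p"
  defines "K \<equiv> meet_index x"
  shows "nb_walk adj (horo_path x) (K + K)" "horo_path x 0 = x" "horo_path x (K + K) = o0"
    "0 < K \<Longrightarrow> horo_path x (K + K - 1) = rp 1"
proof -
  let ?r = "ray_from x \<omega>p"
  have tail: "?r K = rp K" using horosphere_ray_from[OF assms(1), of 0] by (simp add: K_def)
  have "nb_walk adj (\<lambda>i. if i < K then ?r i else rp (K - (i - K))) (K + K)"
  proof (rule nb_walk_append)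
    show "nb_walk adj ?r K" using ray_from(3)[OF \<omega>p] by (simp add: is_ray_iff_nb_walk)
    show "nb_walk adj (\<lambda>i. rp (K - i)) K"
      using is_ray_reverse_nb_walk rp(3) .
    show "0 < K \<and> 0 < K \<longrightarrow> ?r (K - 1) \<noteq> rp (K - 1)"
      using ray_from_before_meet_index[of "K - 1" x] by (auto simp: K_def)
  qed (simp add: tail)
  moreover have "horo_path x = (\<lambda>i. if i < K then ?r i else rp (K - (i - K)))"
    by (simp add: horo_path_def K_def fun_eq_iff)
  ultimately show "nb_walk adj (horo_path x) (K + K)" by simp
  show "horo_path x 0 = x" using tail ray_from(2)[OF \<omega>p] rp(2)
    by (cases "K = 0") (simp_all add: horo_path_def K_def)
  show "horo_path x (K + K) = o0" using rp(2) by (simp add: horo_path_def K_def)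
  assume "0 < K"
  then have "\<not> K + K - 1 < K" "K - (K + K - 1 - K) = 1" by auto
  then show "horo_path x (K + K - 1) = rp 1" by (simp add: horo_path_def K_def)
qed

lemma gdist_horosphere:
  assumes "x \<in> horosphere adj o0 \<omega>p"
  shows "gdist adj x o0 = 2 * meet_index x"
  using gdist_nb_walk[OF horo_path(1)[OF assms]] horo_path(2,3)[OF assms] by simp

lemma horo_path_not_on_rm:
  assumes "x \<in> horosphere adj o0 \<omega>p" and k: "k < meet_index x + meet_index x"
  shows "horo_path x k \<notin> range rm"
proof
  let ?K = "meet_index x" and ?W = "horo_path x"
  assume "?W k \<in> range rm"
  then obtain j where j: "?W k = rm j" by blast
  \<comment> \<open>two non-backtracking walks from rm j to o0, one through rp 1 and one through rm 1\<close>
  have walk: "nb_walk adj (\<lambda>i. ?W (i + k)) (?K + ?K - k)"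
    using nb_walk_shift[OF horo_path(1)[OF assms(1)], of k] k by simp
  have "?W (?K + ?K - k + k) = rm (j - j)" using k horo_path(3)[OF assms(1)] rm(2) by simp
  then have unique: "?K + ?K - k = j \<and> (\<forall>i\<le>?K + ?K - k. ?W (i + k) = rm (j - i))"
    using nb_walk_unique[OF walk is_ray_reverse_nb_walk[OF rm(3)]] j by simp
  then have "?W ((j - 1) + k) = rm (j - (j - 1))" by simp
  moreover have "(j - 1) + k = ?K + ?K - 1" "j - (j - 1) = 1" using unique k by auto
  ultimately have "?W (?K + ?K - 1) = rm 1" by simp
  then show False using horo_path(4)[OF assms(1)] rp_1_neq_rm_1 k by simp
qed

lemma busemann_horosphere:
  assumes "x \<in> horosphere adj o0 \<omega>p"
  shows "busemann adj o0 x \<omega>m = - int (gdist adj x o0)"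
proof -
  let ?K = "meet_index x" and ?W = "horo_path x"
  define R where "R i = (if i < ?K + ?K then ?W i else rm (i - (?K + ?K)))" for i
  have "nb_walk adj R (?K + ?K + n)" for n
    unfolding R_def using horo_path[OF assms] rm rp_1_neq_rm_1
    by (intro nb_walk_append) (auto simp: is_ray_iff_nb_walk)
  then have "is_ray adj R" unfolding is_ray_iff_nb_walk by (meson le_add2 nb_walk_mono)
  moreover have "\<forall>n. rm (n + 0) = R (n + (?K + ?K))" by (simp add: R_def)
  ultimately have "R \<in> \<omega>m"
    using boundary_mem_iff[OF \<omega>m rm(1)] rm(3) unfolding ray_rel_def by blast
  moreover have "R 0 = x"
    using horo_path(2,3)[OF assms] rm(2) by (cases "?K = 0") (auto simp: R_def)
  ultimately have ray: "ray_from x \<omega>m = R" by (rule ray_from_eqI[OF \<omega>m])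
  have meet: "(LEAST k. R k \<in> range rm) = ?K + ?K"
  proof (rule Least_equality)
    show "R (?K + ?K) \<in> range rm" by (simp add: R_def)
    show "\<And>k. R k \<in> range rm \<Longrightarrow> ?K + ?K \<le> k"
      using horo_path_not_on_rm[OF assms] by (metis R_def not_le)
  qed
  have "busemann adj o0 x \<omega>m = int (gdist adj o0 o0) - int (gdist adj x o0)"
    unfolding busemann_def Let_def ray meet using rm(2) by (simp add: R_def)
  then show ?thesis by simp
qed

lemma horosphere_mem_branch_sphere:
  assumes "x \<in> horosphere adj o0 \<omega>p" "meet_index x \<le> n"
  shows "x \<in> branch_sphere adj (rp n) (rp (Suc n)) n"
proof -
  let ?r = "ray_from x \<omega>p" and ?K = "meet_index x"
  have tail: "?r ?K = rp ?K" using horosphere_ray_from[OF assms(1), of 0] by simp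
  define J where "J i = (if i < n - ?K then rp (n - i) else ?r (?K - (i - (n - ?K))))" for i
  have "nb_walk adj J (n - ?K + ?K)"
    unfolding J_def
  proof (rule nb_walk_append)
    show "nb_walk adj (\<lambda>i. rp (n - i)) (n - ?K)"
      using is_ray_reverse_nb_walk[OF rp(3)] nb_walk_mono by (meson diff_le_self)
    show "nb_walk adj (\<lambda>i. ?r (?K - i)) ?K"
      using is_ray_reverse_nb_walk[OF ray_from(3)[OF \<omega>p]] .
    show "rp (n - (n - ?K)) = ?r (?K - 0)" using tail assms(2) by simp
    show "0 < n - ?K \<and> 0 < ?K \<longrightarrow> rp (n - (n - ?K - 1)) \<noteq> ?r (?K - 1)"
      using ray_from_before_meet_index[of "?K - 1" x] by (metis diff_less rangeI zero_less_one)
  qed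
  then have walk: "nb_walk adj J n" using assms(2) by simp
  have start: "J 0 = rp n" using tail assms(2) by (cases "?K = n") (auto simp: J_def)
  have end_: "J n = x" using assms(2) ray_from(2)[OF \<omega>p] by (auto simp: J_def)
  have "J 1 \<noteq> rp (Suc n)" if "0 < n"
  proof (cases "?K < n")
    case True
    moreover have "n - ?K = 1 \<Longrightarrow> n - 1 = ?K" by simp
    ultimately have "J 1 = rp (n - 1)" using tail by (cases "n - ?K = 1") (auto simp: J_def)
    then show ?thesis using ray_inj[OF rp(3)] by (auto simp: inj_eq)
  next
    case False
    then have "J 1 = ?r (?K - 1)" using assms(2) by (simp add: J_def)
    then show ?thesis using ray_from_before_meet_index[of "?K - 1" x] that False by auto
  qed
  then show ?thesis unfolding branch_sphere_def using walk start end_ by force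
qed

abbreviation horo_ball :: "nat \<Rightarrow> 'v set" where
  "horo_ball n \<equiv> {x \<in> horosphere adj o0 \<omega>p. gdist adj x o0 \<le> 2 * n}"

lemma finite_horo_ball: "finite (horo_ball n)"
  and card_horo_ball_le: "card (horo_ball n) \<le> q ^ n"
proof -
  have "horo_ball n \<subseteq> branch_sphere adj (rp n) (rp (Suc n)) n"
    using horosphere_mem_branch_sphere gdist_horosphere by auto
  moreover have "adj (rp n) (rp (Suc n))" using rp(3) unfolding is_ray_def by blast
  ultimately show "finite (horo_ball n)" "card (horo_ball n) \<le> q ^ n"
    using card_branch_sphere by (meson card_mono finite_subset order_trans)+
qed

lemma horo_ball_0: "horo_ball 0 = {o0}"
  using busemann_rp[of 0] rp(2) by (auto simp: horosphere_def gdist_eq_0_iff)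

lemma fixes_rp_tail:
  assumes "bact u \<omega>p = \<omega>p" "u (rp k) = rp k"
  shows "u (rp (k + i)) = rp (k + i)"
proof -
  have "u \<circ> rp \<in> \<omega>p" using rp(1) assms(1) unfolding bact_def by blast
  then have "(\<lambda>i. (u \<circ> rp) (i + k)) = (\<lambda>i. rp (i + k))"
    by (intro boundary_eq_if_start_eq[OF \<omega>p boundary_shift_mem[OF \<omega>p \<open>u \<circ> rp \<in> \<omega>p\<close>]
        boundary_shift_mem[OF \<omega>p rp(1)]]) (use assms(2) in simp)
  then show ?thesis by (metis add.commute comp_apply)
qed

lemma orbit_in_horo_ball:
  assumes "u \<in> Bgrp_n adj o0 \<omega>p n"
  shows "u o0 \<in> horo_ball n"
proof -
  let ?K = "meet_index (u o0)"
  have u: "bact u \<omega>p = \<omega>p" "u (rp n) = rp n"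
    using assms unfolding Bgrp_n_def Bgrp_def stab_def by auto
  have "u \<circ> rp \<in> \<omega>p" using rp(1) u(1) unfolding bact_def by blast
  then have ray: "ray_from (u o0) \<omega>p = u \<circ> rp" using ray_from_eqI[OF \<omega>p] rp(2) by simp
  then have K: "?K \<le> n" unfolding meet_index_def using u(2) by (intro Least_le) simp
  obtain j where j: "\<forall>i. ray_from (u o0) \<omega>p (?K + i) = rp (j + i)"
    and bus: "busemann adj o0 (u o0) \<omega>p = int j - int ?K"
    by (rule ray_from_meet_index)
  from j[rule_format, of "n - ?K"] have "rp n = rp (j + (n - ?K))"
    using ray K u(2) by simp
  then have "j = ?K" using ray_inj[OF rp(3)] K by (auto simp: inj_eq)
  then have "u o0 \<in> horosphere adj o0 \<omega>p" using bus unfolding horosphere_def by simp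
  then show ?thesis using gdist_horosphere K by simp
qed

definition orbit_fibre :: "nat \<Rightarrow> 'v \<Rightarrow> ('v \<Rightarrow> 'v) set" where
  "orbit_fibre n x = {u \<in> Bgrp_n adj o0 \<omega>p n. u o0 = x}"

lemma orbit_fibre_eq_coset:
  assumes u0: "u0 \<in> Bgrp_n adj o0 \<omega>p n"
  shows "orbit_fibre n (u0 o0) = (\<lambda>v. u0 \<circ> v) ` (Bgrp adj \<omega>p \<inter> stab adj o0)"
proof
  have u0': "u0 \<in> automs adj" "bact u0 \<omega>p = \<omega>p" "u0 (rp n) = rp n"
    using u0 unfolding Bgrp_n_def Bgrp_def stab_def by auto
  have bij: "bij u0" using u0'(1) unfolding automs_def by blast
  show "orbit_fibre n (u0 o0) \<subseteq> (\<lambda>v. u0 \<circ> v) ` (Bgrp adj \<omega>p \<inter> stab adj o0)"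
  proof
    fix w assume "w \<in> orbit_fibre n (u0 o0)"
    then have w: "w \<in> automs adj" "bact w \<omega>p = \<omega>p" "w o0 = u0 o0"
      unfolding orbit_fibre_def Bgrp_n_def Bgrp_def stab_def by auto
    have "u0 \<circ> (inv u0 \<circ> w) = w" using bij by (auto simp: bij_is_surj surj_f_inv_f)
    moreover have "inv u0 \<circ> w \<in> automs adj" by (rule automs_comp[OF automs_inv[OF u0'(1)] w(1)])
    moreover have "bact (inv u0 \<circ> w) \<omega>p = \<omega>p"
      unfolding bact_comp w(2) by (rule bact_inv[OF u0'(1,2)])
    moreover have "(inv u0 \<circ> w) o0 = o0" using w(3) bij by (simp add: bij_is_inj)
    ultimately show "w \<in> (\<lambda>v. u0 \<circ> v) ` (Bgrp adj \<omega>p \<inter> stab adj o0)"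
      unfolding Bgrp_def stab_def by (metis (mono_tags, lifting) IntI image_eqI mem_Collect_eq)
  qed
  show "(\<lambda>v. u0 \<circ> v) ` (Bgrp adj \<omega>p \<inter> stab adj o0) \<subseteq> orbit_fibre n (u0 o0)"
  proof
    fix w assume "w \<in> (\<lambda>v. u0 \<circ> v) ` (Bgrp adj \<omega>p \<inter> stab adj o0)"
    then obtain v where v: "v \<in> automs adj" "bact v \<omega>p = \<omega>p" "v o0 = o0" "w = u0 \<circ> v"
      unfolding Bgrp_def stab_def by blast
    have "v (rp n) = rp n" using fixes_rp_tail[OF v(2), of 0 n] v(3) rp(2) by simp
    then have "w \<in> automs adj" "bact w \<omega>p = \<omega>p" "w (rp n) = rp n" "w o0 = u0 o0"
      using v u0' automs_comp by (auto simp: bact_comp)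
    then show "w \<in> orbit_fibre n (u0 o0)"
      unfolding orbit_fibre_def Bgrp_n_def Bgrp_def stab_def by blast
  qed
qed

end

locale haar_frame = geodesic_frame +
  fixes \<mu>
  assumes haar: "normalized_haar q adj o0 \<omega>p \<mu>" and q_pos: "0 < q"
begin

lemma orbit_fibre_sets: "orbit_fibre n x \<in> sets \<mu>"
proof -
  have "orbit_fibre n x = Bgrp adj \<omega>p \<inter> {u. u (rp n) = rp n} \<inter> {u. u o0 = x}"
    unfolding orbit_fibre_def Bgrp_n_def Bgrp_def stab_def by blast
  then show ?thesis using normalized_haar_sets_fix[OF haar] by simp
qed

lemma emeasure_orbit_fibre:
  assumes "orbit_fibre n x \<noteq> {}"
  shows "emeasure \<mu> (orbit_fibre n x) = 1"
proof -
  obtain u0 where u0: "u0 \<in> Bgrp_n adj o0 \<omega>p n" "u0 o0 = x"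
    using assms unfolding orbit_fibre_def by blast
  have "Bgrp adj \<omega>p \<inter> stab adj o0 = orbit_fibre 0 o0"
    using rp(2) unfolding orbit_fibre_def Bgrp_n_def stab_def by auto
  then have "Bgrp adj \<omega>p \<inter> stab adj o0 \<in> sets \<mu>" using orbit_fibre_sets by simp
  then have "emeasure \<mu> (orbit_fibre n x) = emeasure \<mu> (Bgrp adj \<omega>p \<inter> stab adj o0)"
    using orbit_fibre_eq_coset[OF u0(1)] u0 haar unfolding normalized_haar_def Bgrp_n_def by simp
  also have "\<dots> = 1"
    using haar busemann_rp[of 0] rp(2) q_pos unfolding normalized_haar_def by simp
  finally show ?thesis .
qed

lemma emeasure_Bgrp_n: "emeasure \<mu> (Bgrp_n adj o0 \<omega>p n) = of_nat (q ^ n)"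
  using haar busemann_rp[of n] q_pos unfolding normalized_haar_def Bgrp_n_def
  by (simp add: powr_realpow ennreal_of_nat_eq_real_of_nat)

lemma orbit_fibre_nonempty:
  assumes "x \<in> horo_ball n"
  shows "orbit_fibre n x \<noteq> {}"
proof -
  let ?H = "{y \<in> horo_ball n. orbit_fibre n y \<noteq> {}}"
  have "Bgrp_n adj o0 \<omega>p n = (\<Union>y\<in>horo_ball n. orbit_fibre n y)"
    using orbit_in_horo_ball unfolding orbit_fibre_def by blast
  moreover have "(\<Sum>y\<in>horo_ball n. emeasure \<mu> (orbit_fibre n y)) =
      emeasure \<mu> (\<Union>y\<in>horo_ball n. orbit_fibre n y)"
    by (rule sum_emeasure[OF _ _ finite_horo_ball])
      (use orbit_fibre_sets in \<open>auto simp: orbit_fibre_def disjoint_family_on_def\<close>)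
  ultimately have
    "emeasure \<mu> (Bgrp_n adj o0 \<omega>p n) = (\<Sum>y\<in>horo_ball n. emeasure \<mu> (orbit_fibre n y))"
    by simp
  also have "\<dots> = (\<Sum>y\<in>horo_ball n. if orbit_fibre n y \<noteq> {} then 1 else 0)"
    using emeasure_orbit_fibre by (intro sum.cong) auto
  also have "\<dots> = of_nat (card ?H)"
    unfolding sum.inter_filter[OF finite_horo_ball, symmetric] by simp
  finally have "card ?H = q ^ n" using emeasure_Bgrp_n by simp
  moreover have "card ?H \<le> card (horo_ball n)" by (rule card_mono[OF finite_horo_ball]) blast
  ultimately have "card ?H = card (horo_ball n)" using card_horo_ball_le[of n] by simp
  then have "?H = horo_ball n" by (intro card_subset_eq[OF finite_horo_ball]) auto
  with assms show ?thesis by blast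
qed

lemma measure_orbit_fibre: "x \<in> horo_ball n \<Longrightarrow> measure \<mu> (orbit_fibre n x) = 1"
  using emeasure_orbit_fibre orbit_fibre_nonempty by (simp add: measure_def)

lemma I_op_eq_horo_ball_sum:
  "I_op q adj o0 \<omega>m \<omega>p \<mu> s' n f g =
     (\<Sum>x \<in> horo_ball n. f (g x, bact g \<omega>p) *
        of_nat q powr (- of_nat (gdist adj x o0) * (1/2 - \<i> * cnj s')))"
proof -
  let ?c = "1/2 - \<i> * cnj s'"
  have "I_op q adj o0 \<omega>m \<omega>p \<mu> s' n f g =
      (\<Sum>x \<in> horo_ball n.
         f (g x, bact g \<omega>p) * of_nat q powr (of_int (busemann adj o0 x \<omega>m) * ?c))"
    unfolding I_op_def
  proof (rule set_integral_fibrewise[OF finite_horo_ball])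
    fix u assume u: "u \<in> Bgrp_n adj o0 \<omega>p n"
    then have "bact u \<omega>p = \<omega>p" unfolding Bgrp_n_def Bgrp_def by blast
    with u orbit_in_horo_ball show "u o0 \<in> horo_ball n \<and>
        f ((g \<circ> u) o0, bact (g \<circ> u) \<omega>p) *
          of_nat q powr (of_int (busemann adj o0 (u o0) \<omega>m) * ?c) =
        f (g (u o0), bact g \<omega>p) * of_nat q powr (of_int (busemann adj o0 (u o0) \<omega>m) * ?c)"
      by (simp add: bact_comp)
  qed (use orbit_fibre_sets measure_orbit_fibre in \<open>auto simp: orbit_fibre_def\<close>)
  also have "\<dots> =
      (\<Sum>x \<in> horo_ball n. f (g x, bact g \<omega>p) * of_nat q powr (- of_nat (gdist adj x o0) * ?c))"
    using busemann_horosphere by (intro sum.cong) auto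
  finally show ?thesis .
qed

end

theorem lemma5p5:
  fixes q :: nat and adj :: "'v \<Rightarrow> 'v \<Rightarrow> bool" and o0 :: 'v
    and \<omega>m \<omega>p :: "(nat \<Rightarrow> 'v) set" and \<mu> :: "('v \<Rightarrow> 'v) measure"
    and s' :: complex and f :: "'v \<times> (nat \<Rightarrow> 'v) set \<Rightarrow> complex"
  assumes "2 \<le> q"
    and "regular_tree q adj"
    and "\<omega>m \<in> boundary adj" and "\<omega>p \<in> boundary adj" and "\<omega>m \<noteq> \<omega>p"
    and "range (ray_from o0 \<omega>m) \<inter> range (ray_from o0 \<omega>p) = {o0}"
    and "normalized_haar q adj o0 \<omega>p \<mu>"
    and "lc_cc adj o0 f"
  shows "(\<forall>n. \<forall>g \<in> automs adj.
            I_op q adj o0 \<omega>m \<omega>p \<mu> s' n f g =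
            (\<Sum>x \<in> {x \<in> horosphere adj o0 \<omega>p. gdist adj x o0 \<le> 2 * n}.
               f (g x, bact g \<omega>p) *
               of_nat q powr (- of_nat (gdist adj x o0) * (1/2 - \<i> * cnj s'))))
       \<and> (\<forall>g \<in> automs adj. I_op q adj o0 \<omega>m \<omega>p \<mu> s' 0 f g = f (g o0, bact g \<omega>p))"
proof -
  interpret haar_frame q adj o0 \<omega>m \<omega>p \<mu>
    using assms by unfold_locales auto
  have "I_op q adj o0 \<omega>m \<omega>p \<mu> s' 0 f g = f (g o0, bact g \<omega>p)" for g
    using I_op_eq_horo_ball_sum[of s' 0 f g] q_pos unfolding horo_ball_0 by simp
  then show ?thesis using I_op_eq_horo_ball_sum by blast
qed

end
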